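(* Let $\mathcal{A}\colon\mathbb{S}^n\to\mathbb{R}^p$ and $\mathcal{B}\colon\mathbb{S}^n\to\mathbb{R}^q$ be linear, $a\in\mathbb{R}^p$, $b\in\mathbb{R}^q$, and $\mathcal{C}:=\{X\in\mathbb{S}^n_+ : \mathcal{A}(X)=a,\ \mathcal{B}(X)\le b\}$. Suppose $\mathcal{C}\cap\mathbb{S}^n_{++}\neq\emptyset$. Let $\bar X\in\mathcal{C}$ and let $P$ denote the orthogonal projection of $\mathbb{R}^q$ onto $\{z\in\mathbb{R}^q : \operatorname{supp}(z)\cap\operatorname{supp}(\mathcal{B}(\bar X)-b)=\emptyset\}$. Then \[ \dim N_{\mathcal{C}}(\bar X) = \dim(\mathbb{S}^n) - \dim\Bigl(\operatorname{Null}(\mathcal{A})\cap\operatorname{Null}(P\circ\mathcal{B})\cap \operatorname{span}\{\tfrac12(\bar X uv^{\mathsf T}+vu^{\mathsf T}\bar X) : u,v\in\mathbb{R}^n\}\Bigr). \] In particular, if $\bar X=\bar x\bar x^{\mathsf T}$ for some nonzero $\bar x\in\mathbb{R}^n$, then, with $A_i:=\mathcal{A}^*(e_i)$ for $i\in[p]$ and $B_i:=\mathcal{B}^*(e_i)$ for $i\in[q]$, \[ \dim N_{\mathcal{C}}(\bar x\bar x^{\mathsf T}) = \dim(\mathbb{S}^n) - \dim\Bigl(\bigl(\{A_i\bar x : i\in[p]\}\cup\{B_i\bar x : i\in[q]\setminus\operatorname{supp}(\mathcal{B}(\bar x\bar x^{\mathsf T})-b)\}\bigr)^{\perp}\Bigr);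 \] thus $\bar x\bar x^{\mathsf T}\in\mathcal{C}$ is a vertex of $\mathcal{C}$ if and only if $\{A_i\bar x : i\in[p]\}\cup\{B_i\bar x : i\in[q]\setminus\operatorname{supp}(\mathcal{B}(\bar x\bar x^{\mathsf T})-b)\}$ spans $\mathbb{R}^n$.
   Context: $\mathbb{S}^n$ is the space of real symmetric $n\times n$ matrices with trace inner product; $\mathbb{S}^n_+$, $\mathbb{S}^n_{++}$ are the positive semidefinite and positive definite cones. $\operatorname{supp}(z)=\{i:z_i\neq0\}$; $e_i$ are standard basis vectors. For a convex set $\mathcal{C}$ and $\bar X\in\mathcal{C}$, $N_{\mathcal{C}}(\bar X):=\{C\in\mathbb{S}^n : \langle C,X\rangle\le\langle C,\bar X\rangle\ \forall X\in\mathcal{C}\}$; $\bar X$ is a vertex of $\mathcal{C}$ if $\dim N_{\mathcal{C}}(\bar X)=\dim\mathbb{S}^n$. *)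

theory Defs
  imports "HOL-Analysis.Analysis"
begin

definition symm :: "(real^'n^'n) set" where
  "symm = {X. transpose X = X}"

definition tr_inner :: "real^'n^'n \<Rightarrow> real^'n^'n \<Rightarrow> real" where
  "tr_inner C X = trace (C ** X)"

definition psd :: "real^'n^'n \<Rightarrow> bool" where
  "psd X \<longleftrightarrow> X \<in> symm \<and> (\<forall>v. 0 \<le> v \<bullet> (X *v v))"

definition pd :: "real^'n^'n \<Rightarrow> bool" where
  "pd X \<longleftrightarrow> X \<in> symm \<and> (\<forall>v. v \<noteq> 0 \<longrightarrow> 0 < v \<bullet> (X *v v))"

definition normal_cone :: "(real^'n^'n) set \<Rightarrow> real^'n^'n \<Rightarrow> (real^'n^'n) set" where
  "normal_cone S Xb = {C \<in> symm. \<forall>X\<in>S. tr_inner C X \<le> tr_inner C Xb}"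

definition is_vertex :: "(real^'n^'n) set \<Rightarrow> real^'n^'n \<Rightarrow> bool" where
  "is_vertex S Xb \<longleftrightarrow> Xb \<in> S \<and> dim (normal_cone S Xb) = dim (symm :: (real^'n^'n) set)"

definition supp :: "real^'q \<Rightarrow> 'q set" where
  "supp z = {i. z $ i \<noteq> 0}"

definition orth_proj :: "('a::real_inner) set \<Rightarrow> 'a \<Rightarrow> 'a" where
  "orth_proj V z = (THE w. w \<in> V \<and> (\<forall>v\<in>V. (z - w) \<bullet> v = 0))"

definition outer :: "real^'n \<Rightarrow> real^'n \<Rightarrow> real^'n^'n" where
  "outer u v = (\<chi> i j. u $ i * v $ j)"

text \<open>Adjoint of a linear map from the symmetric matrices (trace inner product) to R^p,
  applied to the unit vector e_i: the unique symmetric M with <M,X> = A(X)_i for all X in S^n.\<close>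
definition sadj :: "(real^'n^'n \<Rightarrow> real^'p) \<Rightarrow> 'p \<Rightarrow> real^'n^'n" where
  "sadj A i = (THE M. M \<in> symm \<and> (\<forall>X\<in>symm. tr_inner M X = A X $ i))"

definition feas :: "(real^'n^'n \<Rightarrow> real^'p) \<Rightarrow> real^'p \<Rightarrow> (real^'n^'n \<Rightarrow> real^'q) \<Rightarrow> real^'q
    \<Rightarrow> (real^'n^'n) set" where
  "feas A a B b = {X. psd X \<and> A X = a \<and> (\<forall>i. B X $ i \<le> b $ i)}"

definition orth_compl :: "('a::real_inner) set \<Rightarrow> 'a set" where
  "orth_compl W = {y. \<forall>w\<in>W. w \<bullet> y = 0}"

end

theory Submission
  imports Defs
begin

text \<open>
  Let \<open>N\<close> be the normal cone of \<open>\<C>\<close> at \<open>X\<close> and \<open>L\<close> the set of symmetric \<open>Y\<close> with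
  \<open>\<A>(Y) = 0\<close>, \<open>\<B>\<^sub>i(Y) = 0\<close> for the active constraints \<open>i\<close>, and \<open>Y = X M + M\<^sup>T X\<close> for some \<open>M\<close>.
  Then \<open>L\<close> is exactly the orthogonal complement of \<open>N\<close> in \<open>\<S>\<^sup>n\<close>, whence
  \<open>dim N = dim \<S>\<^sup>n - dim L\<close>. One inclusion holds because \<open>A\<^sub>i\<close>, the active \<open>B\<^sub>i\<close> and \<open>-w w\<^sup>T\<close> for
  \<open>w \<in> Null X\<close> all lie in \<open>N\<close>, and a symmetric matrix whose quadratic form vanishes on
  \<open>Null X\<close> has the form \<open>X M + M\<^sup>T X\<close>. For the other, if \<open>Y \<in> L\<close> and \<open>S\<close> is a Slater point, then
  \<open>X + \<epsilon> (Y + \<delta> (S - X))\<close> is feasible for small \<open>\<epsilon>\<close>: the definite term \<open>\<delta> S\<close> absorbs the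
  second-order error of moving along the tangent direction \<open>Y\<close>. Letting \<open>\<delta> \<rightarrow> 0\<close> gives
  \<open>\<langle>C, \<plusminus>Y\<rangle> \<le> 0\<close> for \<open>C \<in> N\<close>. At \<open>X = x x\<^sup>T\<close> the tangent space is \<open>{x w\<^sup>T + w x\<^sup>T}\<close>, parametrised
  injectively by \<open>w\<close>, and the linear conditions on \<open>Y\<close> become orthogonality of \<open>w\<close> to the
  vectors \<open>A\<^sub>i x\<close> and the active \<open>B\<^sub>i x\<close>.
\<close>

section \<open>Symmetric matrices and the trace inner product\<close>

lemma symm_entry: "X \<in> symm \<Longrightarrow> X$j$i = X$i$j"
  unfolding symm_def transpose_def by (auto simp: vec_eq_iff)

lemma symmI: "(\<And>i j. X$j$i = X$i$j) \<Longrightarrow> X \<in> symm"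
  unfolding symm_def transpose_def by (simp add: vec_eq_iff)

lemma subspace_symm: "subspace symm"
  unfolding subspace_def by (auto intro!: symmI simp: symm_entry)

lemma inner_matrix: "(X::real^'n^'m) \<bullet> Y = (\<Sum>i\<in>UNIV. \<Sum>j\<in>UNIV. X$i$j * Y$i$j)"
  by (simp add: inner_vec_def)

lemma tr_inner_eq_inner:
  assumes "C \<in> symm" shows "tr_inner C X = C \<bullet> (X::real^'n^'n)"
proof -
  have "tr_inner C X = (\<Sum>i\<in>UNIV. \<Sum>k\<in>UNIV. C$i$k * X$k$i)"
    by (simp add: tr_inner_def trace_def matrix_matrix_mult_def)
  also have "\<dots> = (\<Sum>k\<in>UNIV. \<Sum>i\<in>UNIV. C$i$k * X$k$i)" by (rule sum.swap)
  also have "\<dots> = (\<Sum>k\<in>UNIV. \<Sum>i\<in>UNIV. C$k$i * X$k$i)"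
    using symm_entry[OF assms] by simp
  finally show ?thesis by (simp add: inner_matrix)
qed

lemma feas_symm: "Z \<in> feas A a B b \<Longrightarrow> Z \<in> symm"
  by (simp add: feas_def psd_def)

lemma normal_cone_iff:
  "C \<in> normal_cone S Xb \<longleftrightarrow> C \<in> symm \<and> (\<forall>X\<in>S. C \<bullet> X \<le> C \<bullet> Xb)"
  by (auto simp: normal_cone_def tr_inner_eq_inner)

lemma symm_inner_mv_commute:
  assumes "X \<in> symm" shows "u \<bullet> (X *v v) = v \<bullet> (X *v (u::real^'n))"
proof -
  have "u \<bullet> (X *v v) = (\<Sum>i\<in>UNIV. \<Sum>j\<in>UNIV. u$i * X$i$j * v$j)"
    by (simp add: inner_vec_def matrix_vector_mult_def sum_distrib_left mult.assoc)
  also have "\<dots> = (\<Sum>j\<in>UNIV. \<Sum>i\<in>UNIV. u$i * X$i$j * v$j)" by (rule sum.swap)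
  also have "\<dots> = v \<bullet> (X *v u)"
    by (simp add: inner_vec_def matrix_vector_mult_def sum_distrib_left symm_entry[OF assms] ac_simps)
  finally show ?thesis .
qed

lemma transpose_add: "transpose (A + B) = transpose A + transpose (B::real^'n^'m)"
  by (simp add: transpose_def vec_eq_iff)

lemma transpose_diff: "transpose (A - B) = transpose A - transpose (B::real^'n^'m)"
  by (simp add: transpose_def vec_eq_iff)

lemma matrix_add_rdistrib: "((A::real^'n^'m) + B) ** C = A ** C + B ** C"
  by (simp add: matrix_matrix_mult_def vec_eq_iff sum.distrib algebra_simps)

lemma matrix_diff_ldistrib: "(A::real^'n^'m) ** (B - C) = A ** B - A ** C"
  by (simp add: matrix_matrix_mult_def vec_eq_iff sum_subtractf algebra_simps)

lemma matrix_diff_rdistrib: "((A::real^'n^'m) - B) ** C = A ** C - B ** C"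
  by (simp add: matrix_matrix_mult_def vec_eq_iff sum_subtractf algebra_simps)

lemma outer_inner: "outer u v \<bullet> X = u \<bullet> (X *v (v::real^'n))"
  by (simp add: outer_def inner_matrix inner_vec_def matrix_vector_mult_def sum_distrib_left ac_simps)

lemma outer_mv: "outer u v *v x = (v \<bullet> x) *\<^sub>R u"
  by (simp add: outer_def matrix_vector_mult_def vec_eq_iff inner_vec_def sum_distrib_left ac_simps)

lemma transpose_outer: "transpose (outer u v) = outer v u"
  by (simp add: transpose_def outer_def vec_eq_iff mult.commute)

lemma outer_symm: "outer w w \<in> symm"
  by (rule symmI) (simp add: outer_def mult.commute)

lemma orth_proj_supp:
  "orth_proj {z. supp z \<inter> supp c = {}} z = (\<chi> i. if c$i = 0 then z$i else (0::real))"
  (is "orth_proj ?V z = ?w")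
proof -
  have wV: "?w \<in> ?V" by (auto simp: supp_def)
  have wo: "\<forall>v\<in>?V. (z - ?w) \<bullet> v = 0"
  proof
    fix v assume "v \<in> ?V"
    then have "\<And>i. c$i \<noteq> 0 \<Longrightarrow> v$i = 0" by (auto simp: supp_def)
    then show "(z - ?w) \<bullet> v = 0" unfolding inner_vec_def
      by (intro sum.neutral) auto
  qed
  have uniq: "w' = ?w" if "w' \<in> ?V" "\<forall>v\<in>?V. (z - w') \<bullet> v = 0" for w'
  proof (subst vec_eq_iff, intro allI)
    fix i
    show "w' $ i = ?w $ i"
    proof (cases "c$i = 0")
      case True
      have "axis i 1 \<in> ?V" using True by (auto simp: supp_def axis_def)
      then have "(z - w') \<bullet> axis i 1 = 0" using that by blast
      then show ?thesis using True by (simp add: inner_axis)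
    next
      case False
      then show ?thesis using that(1) by (auto simp: supp_def)
    qed
  qed
  show ?thesis unfolding orth_proj_def
    by (rule the_equality) (use wV wo uniq in blast)+
qed

lemma orth_proj_supp_eq_0_iff:
  "orth_proj {z. supp z \<inter> supp c = {}} z = 0 \<longleftrightarrow> (\<forall>i. c$i = 0 \<longrightarrow> z$i = (0::real))"
  by (auto simp: orth_proj_supp vec_eq_iff)

lemma symm_representer_exists:
  fixes f :: "real^'n^'n \<Rightarrow> real"
  assumes "linear f" shows "\<exists>M\<in>symm. \<forall>X\<in>symm. M \<bullet> X = f X"
proof -
  define F where "F = adjoint f 1"
  have F: "f X = F \<bullet> X" for X
    using adjoint_works[OF assms, of X 1] by (simp add: F_def inner_commute)
  let ?M = "(1/2) *\<^sub>R (F + transpose F)"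
  have "?M \<bullet> X = f X" if "X \<in> symm" for X
  proof -
    have "transpose F \<bullet> X = (\<Sum>j\<in>UNIV. \<Sum>i\<in>UNIV. F$i$j * X$j$i)"
      by (simp add: inner_matrix transpose_def)
    also have "\<dots> = F \<bullet> transpose X"
      by (subst sum.swap) (simp add: inner_matrix transpose_def)
    finally have "transpose F \<bullet> X = F \<bullet> transpose X" .
    then show ?thesis using that by (simp add: F inner_add_left symm_def)
  qed
  moreover have "?M \<in> symm" by (rule symmI) (simp add: transpose_def)
  ultimately show ?thesis by blast
qed

lemma sadj:
  assumes "linear A"
  shows sadj_symm: "sadj A i \<in> symm" and sadj_inner: "X \<in> symm \<Longrightarrow> sadj A i \<bullet> X = A X $ i"
proof -
  have "linear (\<lambda>X. A X $ i)"
    using assms unfolding linear_iff by simp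
  then obtain M where M: "M \<in> symm" "\<And>X. X \<in> symm \<Longrightarrow> M \<bullet> X = A X $ i"
    using symm_representer_exists by blast
  have unique: "M' = M" if M': "M' \<in> symm" "\<And>X. X \<in> symm \<Longrightarrow> M' \<bullet> X = A X $ i" for M'
  proof -
    have "M' - M \<in> symm" by (rule subspace_diff[OF subspace_symm M'(1) M(1)])
    then have "(M' - M) \<bullet> (M' - M) = 0"
      by (simp only: inner_diff_left M(2) M'(2) diff_self)
    then show ?thesis by simp
  qed
  have "sadj A i = M"
    unfolding sadj_def
  proof (rule the_equality)
    show "M \<in> symm \<and> (\<forall>X\<in>symm. tr_inner M X = A X $ i)"
      using M by (simp add: tr_inner_eq_inner)
    show "M' = M" if "M' \<in> symm \<and> (\<forall>X\<in>symm. tr_inner M' X = A X $ i)" for M'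
      using that by (intro unique) (auto simp: tr_inner_eq_inner[symmetric])
  qed
  with M show "sadj A i \<in> symm" "X \<in> symm \<Longrightarrow> sadj A i \<bullet> X = A X $ i" by auto
qed

section \<open>The tangent space of the semidefinite cone\<close>

definition tangent_space :: "real^'n^'n \<Rightarrow> (real^'n^'n) set" where
  "tangent_space X = {X ** M + transpose M ** X | M. True}"

lemma subspace_tangent_space: "subspace (tangent_space X)"
proof -
  have "tangent_space X = range (\<lambda>M. X ** M + transpose M ** X)"
    by (auto simp: tangent_space_def)
  moreover have "linear (\<lambda>M. X ** M + transpose M ** X)"
    by (rule linearI)
       (simp_all add: matrix_add_ldistrib matrix_add_rdistrib transpose_add transpose_scalar
         matrix_scalar_ac scalar_matrix_assoc[symmetric] scaleR_add_right)
  ultimately show ?thesis by (simp add: linear_subspace_image subspace_UNIV)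
qed

lemma span_tangent_generators:
  "span {(1/2) *\<^sub>R (X ** outer u v + outer v u ** X) | u v. True} = tangent_space X"
  (is "span ?G = _")
proof
  have "(1/2) *\<^sub>R (X ** outer u v + outer v u ** X) \<in> tangent_space X" for u v
    unfolding tangent_space_def
    by (intro CollectI exI[of _ "(1/2) *\<^sub>R outer u v"])
       (simp add: transpose_scalar transpose_outer matrix_scalar_ac scalar_matrix_assoc[symmetric]
         scaleR_add_right)
  then show "span ?G \<subseteq> tangent_space X"
    by (intro span_minimal subspace_tangent_space) blast
next
  show "tangent_space X \<subseteq> span ?G"
  proof
    fix Y assume "Y \<in> tangent_space X"
    then obtain M where Y: "Y = X ** M + transpose M ** X" by (auto simp: tangent_space_def)
    \<comment> \<open>expand \<open>M\<close> row by row: \<open>M = \<Sum>\<^sub>k e\<^sub>k (M$k)\<^sup>T\<close>\<close>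
    have "Y = (\<Sum>k\<in>UNIV. 2 *\<^sub>R ((1/2) *\<^sub>R (X ** outer (axis k 1) (M$k) + outer (M$k) (axis k 1) ** X)))"
      unfolding Y
      by (simp add: vec_eq_iff sum_component matrix_matrix_mult_def outer_def axis_def transpose_def
          sum.distrib if_distrib if_distribR sum.delta cong: if_cong)
    then show "Y \<in> span ?G"
      by (simp only:) (intro span_sum span_mul span_base, blast)
  qed
qed

lemma symm_bilinear_zero_on_subspace:
  fixes Y :: "real^'n^'n"
  assumes "Y \<in> symm" "subspace S" and quad: "\<And>w. w \<in> S \<Longrightarrow> w \<bullet> (Y *v w) = 0"
    and "u \<in> S" "v \<in> S"
  shows "u \<bullet> (Y *v v) = 0"
proof -
  have "(u + v) \<bullet> (Y *v (u + v)) = 0" using assms by (simp add: subspace_add)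
  moreover have "v \<bullet> (Y *v u) = u \<bullet> (Y *v v)" by (rule symm_inner_mv_commute[OF \<open>Y \<in> symm\<close>])
  ultimately show ?thesis using quad assms(4,5)
    by (simp add: matrix_vector_right_distrib inner_add_left inner_add_right)
qed

lemma symm_range_plus_null:
  fixes X :: "real^'n^'n"
  assumes "X \<in> symm"
  shows "\<exists>g. X *v (v - X *v g) = 0"
proof -
  let ?R = "range ((*v) X)"
  have "subspace ?R"
    by (simp add: linear_subspace_image matrix_vector_mul_linear subspace_UNIV)
  obtain y z where y: "y \<in> span ?R" and z: "\<And>w. w \<in> span ?R \<Longrightarrow> orthogonal z w"
    and v: "v = y + z"
    using orthogonal_subspace_decomp_exists by blast
  have "y \<in> ?R" using y \<open>subspace ?R\<close> by (metis span_eq_iff)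
  then obtain g where g: "y = X *v g" by blast
  have "(X *v z) \<bullet> u = 0" for u
    using z[of "X *v u"] symm_inner_mv_commute[OF assms, of z u]
    by (simp add: span_base orthogonal_def inner_commute)
  then have "X *v z = 0" by (metis inner_eq_zero_iff)
  then show ?thesis using v g by (intro exI[of _ g]) simp
qed

lemma symm_range_projector_exists:
  fixes X :: "real^'n^'n"
  assumes "X \<in> symm"
  shows "\<exists>G. transpose (X ** G) = X ** G \<and> X ** (X ** G) = X"
proof -
  have "\<forall>j. \<exists>g. X *v (axis j 1 - X *v g) = 0"
    using symm_range_plus_null[OF assms] by blast
  then obtain g where g: "\<And>j. X *v (axis j 1 - X *v g j) = 0" by metis
  define G where "G = (\<chi> i j. g j $ i)"
  define Q where "Q = X ** G"
  have XP: "X ** (mat 1 - Q) = 0"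
    using g by (simp add: Q_def G_def vec_eq_iff matrix_matrix_mult_def matrix_vector_mult_def
        mat_def axis_def sum_subtractf algebra_simps)
  have "transpose Q = transpose G ** X"
    using assms by (simp add: Q_def matrix_transpose_mul symm_def)
  then have "transpose Q ** (mat 1 - Q) = 0"
    by (simp add: matrix_mul_assoc[symmetric] XP)
  then have "transpose Q = transpose Q ** Q"
    by (simp add: matrix_diff_ldistrib)
  then have "transpose Q = Q"
    by (metis matrix_transpose_mul transpose_transpose)
  moreover have "X ** Q = X"
    using XP by (simp add: matrix_diff_ldistrib)
  ultimately show ?thesis by (auto simp: Q_def)
qed

lemma projector_sandwich_in_tangent_space:
  fixes X G Y :: "real^'n^'n"
  defines "Q \<equiv> X ** G"
  assumes X: "X \<in> symm" and Y: "Y \<in> symm" and QT: "transpose Q = Q"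
  shows "Q ** Y + Y ** Q - Q ** Y ** Q \<in> tangent_space X"
proof -
  have GX: "transpose G ** X = Q"
    using QT X by (simp add: Q_def matrix_transpose_mul symm_def)
  define M where "M = G ** (Y - (1/2) *\<^sub>R (Y ** Q))"
  let ?H = "(1/2) *\<^sub>R (Q ** Y ** Q)"
  have XM: "X ** M = Q ** Y - ?H"
    by (simp add: M_def Q_def matrix_diff_ldistrib matrix_scalar_ac scalar_matrix_assoc[symmetric]
        matrix_mul_assoc)
  have MX: "transpose M ** X = Y ** Q - ?H"
    using Y QT
    by (simp add: M_def matrix_transpose_mul transpose_diff transpose_scalar matrix_mul_assoc[symmetric]
        GX matrix_diff_rdistrib scalar_matrix_assoc[symmetric] symm_def)
  have "X ** M + transpose M ** X = Q ** Y + Y ** Q - (?H + ?H)"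
    unfolding XM MX by (simp only: diff_add_eq add_diff_eq diff_diff_eq add.commute add.left_commute)
  also have "?H + ?H = Q ** Y ** Q"
    by (simp only: scaleR_add_right[symmetric] scaleR_half_double)
  finally show ?thesis unfolding tangent_space_def by (auto intro: exI[of _ M])
qed

text \<open>With \<open>Q\<close> the projector onto the range of \<open>X\<close> and \<open>P = I - Q\<close>, the hypothesis gives
  \<open>P Y P = 0\<close>, that is, \<open>Y = Q Y + Y Q - Q Y Q\<close>.\<close>
lemma symm_in_tangent_space:
  fixes X Y :: "real^'n^'n"
  assumes X: "X \<in> symm" and Y: "Y \<in> symm"
    and quad: "\<And>w. X *v w = 0 \<Longrightarrow> w \<bullet> (Y *v w) = 0"
  shows "Y \<in> tangent_space X"
proof -
  obtain G where QT: "transpose (X ** G) = X ** G" and XQ: "X ** (X ** G) = X"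
    using symm_range_projector_exists[OF X] by blast
  define Q where "Q = X ** G"
  define P where "P = mat 1 - Q"
  have PT: "transpose P = P"
    using QT by (simp add: P_def Q_def transpose_diff)
  have XP: "X ** P = 0"
    using XQ by (simp add: P_def Q_def matrix_diff_ldistrib)
  have null: "subspace {w. X *v w = 0}"
    unfolding subspace_def by (simp add: matrix_vector_right_distrib matrix_vector_mult_scaleR)
  have "P ** Y ** P = 0"
  proof (subst matrix_eq, intro allI)
    fix v
    have "X *v (P *v w) = 0" for w by (simp add: matrix_vector_mul_assoc XP)
    then have "(P *v u) \<bullet> (Y *v (P *v v)) = 0" for u
      by (intro symm_bilinear_zero_on_subspace[OF Y null quad]) simp_all
    then have "u \<bullet> ((P ** Y ** P) *v v) = 0" for u
      by (metis PT dot_lmul_matrix matrix_vector_mul_assoc transpose_matrix_vector)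
    then show "(P ** Y ** P) *v v = 0 *v v" by (metis inner_eq_zero_iff matrix_vector_mult_0)
  qed
  then have "Y = Q ** Y + Y ** Q - Q ** Y ** Q"
    by (simp add: P_def matrix_diff_ldistrib matrix_diff_rdistrib matrix_mul_assoc algebra_simps)
  with projector_sandwich_in_tangent_space[OF X Y QT] show ?thesis by (simp add: Q_def)
qed

section \<open>Feasible directions\<close>

lemma pd_quadratic_form_lower_bound:
  fixes S :: "real^'n^'n"
  assumes "pd S" shows "\<exists>\<mu>>0. \<forall>v. \<mu> * (v \<bullet> v) \<le> v \<bullet> (S *v v)"
proof -
  let ?q = "\<lambda>v. v \<bullet> (S *v v)"
  have "axis undefined 1 \<in> sphere (0::real^'n) 1" by simp
  moreover have "continuous_on (sphere 0 1) ?q"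
    by (intro continuous_intros linear_continuous_on linear_linear[THEN iffD1] matrix_vector_mul_linear)
  ultimately obtain u where u: "u \<in> sphere 0 1" and min: "\<And>y. y \<in> sphere 0 1 \<Longrightarrow> ?q u \<le> ?q y"
    using continuous_attains_inf[OF compact_sphere] by blast
  have "u \<noteq> 0" using u by auto
  then have pos: "?q u > 0" using assms by (simp add: pd_def)
  have "?q u * (v \<bullet> v) \<le> ?q v" for v
  proof (cases "v = 0")
    case False
    then have "?q u \<le> ?q ((1 / norm v) *\<^sub>R v)" by (intro min) simp
    also have "\<dots> = ?q v / (norm v)^2"
      by (simp add: matrix_vector_mult_scaleR power2_eq_square)
    finally show ?thesis using False by (simp add: pos_le_divide_eq power2_norm_eq_inner)
  qed simp
  then show ?thesis using pos by blast
qed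

lemma quadratic_form_upper_bound:
  fixes X :: "real^'n^'n"
  shows "\<exists>c. \<forall>v. v \<bullet> (X *v v) \<le> c * (v \<bullet> v)"
proof -
  obtain K where K: "\<And>v. norm (X *v v) \<le> K * norm v"
    using linear_bounded[OF matrix_vector_mul_linear] by blast
  have "v \<bullet> (X *v v) \<le> K * (v \<bullet> v)" for v
  proof -
    have "v \<bullet> (X *v v) \<le> norm v * norm (X *v v)" by (rule norm_cauchy_schwarz)
    also have "\<dots> \<le> norm v * (K * norm v)" by (simp add: K mult_left_mono)
    finally show ?thesis by (simp add: power2_norm_eq_inner[symmetric] power2_eq_square ac_simps)
  qed
  then show ?thesis by blast
qed

lemma inner_mv_transpose: "(M *v u) \<bullet> w = u \<bullet> (transpose M *v (w::real^'n))"
  by (simp add: dot_lmul_matrix[symmetric] inner_commute)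

text \<open>For \<open>t = 1 - \<epsilon>\<delta>\<close>, positive semidefiniteness of \<open>X\<close> at \<open>t v + \<epsilon> M v\<close> controls the
  tangent term up to \<open>\<epsilon>\<^sup>2 (Mv)\<^sup>T X (Mv)\<close>, which the definite term \<open>\<epsilon>\<delta> v\<^sup>T S v\<close> absorbs.\<close>
lemma quadratic_form_perturbation_nonneg:
  fixes X S M :: "real^'n^'n"
  assumes X: "psd X" and S: "\<forall>v. \<mu> * (v \<bullet> v) \<le> v \<bullet> (S *v v)"
    and c: "\<forall>v. (M *v v) \<bullet> (X *v (M *v v)) \<le> c * (v \<bullet> v)"
    and e: "\<epsilon> > 0" and d: "\<delta> > 0" and pos: "1 - \<epsilon> * \<delta> > 0"
    and small: "\<epsilon> * c \<le> (1 - \<epsilon> * \<delta>) * \<delta> * \<mu>"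
  shows "0 \<le> v \<bullet> ((X + \<epsilon> *\<^sub>R ((X ** M + transpose M ** X) + \<delta> *\<^sub>R (S - X))) *v v)"
proof -
  define t where "t = 1 - \<epsilon> * \<delta>"
  define q where "q = v \<bullet> (X *v v)"
  define p where "p = v \<bullet> (X *v (M *v v))"
  define r where "r = (M *v v) \<bullet> (X *v (M *v v))"
  define m where "m = v \<bullet> (S *v v)"
  define n2 where "n2 = v \<bullet> v"
  have Xs: "X \<in> symm" using X by (simp add: psd_def)
  have "(M *v v) \<bullet> (X *v v) = p"
    unfolding p_def by (rule symm_inner_mv_commute[OF Xs])
  moreover have "v \<bullet> ((X *v v) v* M) = (M *v v) \<bullet> (X *v v)"
    by (metis dot_lmul_matrix inner_commute)
  ultimately have val: "v \<bullet> ((X + \<epsilon> *\<^sub>R ((X ** M + transpose M ** X) + \<delta> *\<^sub>R (S - X))) *v v)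
      = t * q + 2 * \<epsilon> * p + \<epsilon> * \<delta> * m"
    by (simp add: t_def q_def p_def m_def matrix_vector_mult_add_rdistrib matrix_vector_mult_diff_rdistrib
        scaleR_matrix_vector_assoc[symmetric] matrix_vector_mul_assoc[symmetric]
        inner_add_right inner_diff_right algebra_simps)
  have "0 \<le> (t *\<^sub>R v + \<epsilon> *\<^sub>R (M *v v)) \<bullet> (X *v (t *\<^sub>R v + \<epsilon> *\<^sub>R (M *v v)))"
    using X by (simp add: psd_def)
  also have "\<dots> = t^2 * q + 2 * t * \<epsilon> * p + \<epsilon>^2 * r"
    using \<open>(M *v v) \<bullet> (X *v v) = p\<close>
    by (simp add: q_def p_def r_def matrix_vector_right_distrib matrix_vector_mult_scaleR
        inner_add_left inner_add_right power2_eq_square algebra_simps)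
  finally have psd_val: "0 \<le> t^2 * q + 2 * t * \<epsilon> * p + \<epsilon>^2 * r" .
  have "\<epsilon>^2 * r \<le> \<epsilon>^2 * (c * n2)"
    using c by (simp add: r_def n2_def mult_left_mono)
  also have "\<dots> \<le> t * \<epsilon> * \<delta> * (\<mu> * n2)"
    using mult_right_mono[OF mult_left_mono[OF small, of \<epsilon>], of n2] e
    by (simp add: n2_def t_def power2_eq_square ac_simps)
  also have "\<dots> \<le> t * \<epsilon> * \<delta> * m"
    using S e d pos by (intro mult_left_mono) (simp_all add: m_def n2_def t_def)
  finally have "0 \<le> t * (t * q + 2 * \<epsilon> * p + \<epsilon> * \<delta> * m)"
    using psd_val by (simp add: power2_eq_square algebra_simps)
  then show ?thesis using pos by (simp add: val t_def zero_le_mult_iff)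
qed

lemma eventually_psd_perturbation:
  fixes X S M :: "real^'n^'n"
  assumes X: "psd X" and S: "pd S" and d: "\<delta> > 0"
  shows "\<forall>\<^sub>F \<epsilon> in at_right 0. psd (X + \<epsilon> *\<^sub>R ((X ** M + transpose M ** X) + \<delta> *\<^sub>R (S - X)))"
proof -
  obtain \<mu> where \<mu>: "\<mu> > 0" "\<forall>v. \<mu> * (v \<bullet> v) \<le> v \<bullet> (S *v v)"
    using pd_quadratic_form_lower_bound[OF S] by blast
  obtain c where "\<forall>v. v \<bullet> ((transpose M ** X ** M) *v v) \<le> c * (v \<bullet> v)"
    using quadratic_form_upper_bound by blast
  then have c: "\<forall>v. (M *v v) \<bullet> (X *v (M *v v)) \<le> c * (v \<bullet> v)"
    by (simp add: inner_mv_transpose matrix_vector_mul_assoc matrix_mul_assoc)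
  have Xs: "X \<in> symm" and Ss: "S \<in> symm" using X S by (simp_all add: psd_def pd_def)
  then have "X ** M + transpose M ** X \<in> symm"
    by (simp add: symm_def transpose_add matrix_transpose_mul add.commute)
  then have symm: "X + \<epsilon> *\<^sub>R ((X ** M + transpose M ** X) + \<delta> *\<^sub>R (S - X)) \<in> symm" for \<epsilon>
    using Xs Ss subspace_symm by (meson subspace_add subspace_scale subspace_diff)
  have "((\<lambda>\<epsilon>. 1 - \<epsilon> * \<delta>) \<longlongrightarrow> 1) (at_right 0)"
    by (auto intro!: tendsto_eq_intros)
  then have "\<forall>\<^sub>F \<epsilon> in at_right 0. 0 < 1 - \<epsilon> * \<delta>"
    by (rule order_tendstoD) simp
  moreover have "((\<lambda>\<epsilon>. (1 - \<epsilon> * \<delta>) * \<delta> * \<mu> - \<epsilon> * c) \<longlongrightarrow> \<delta> * \<mu>) (at_right 0)"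
    by (auto intro!: tendsto_eq_intros)
  then have "\<forall>\<^sub>F \<epsilon> in at_right 0. 0 < (1 - \<epsilon> * \<delta>) * \<delta> * \<mu> - \<epsilon> * c"
    by (rule order_tendstoD) (use d \<mu> in simp)
  ultimately show ?thesis
    using eventually_at_right_less[of 0]
  proof eventually_elim
    case (elim \<epsilon>)
    then show ?case
      using quadratic_form_perturbation_nonneg[OF X \<mu>(2) c _ d] symm by (simp add: psd_def)
  qed
qed

lemma eventually_linear_inequalities:
  fixes B :: "'a::real_vector \<Rightarrow> real^'q"
  assumes "linear B" and X: "\<And>i. B X $ i \<le> b $ i"
    and active: "\<And>i. B X $ i = b $ i \<Longrightarrow> B D $ i \<le> 0"
  shows "\<forall>\<^sub>F \<epsilon> in at_right 0. \<forall>i. B (X + \<epsilon> *\<^sub>R D) $ i \<le> b $ i"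
proof (rule eventually_all_finite)
  fix i
  have lin: "B (X + \<epsilon> *\<^sub>R D) $ i = B X $ i + \<epsilon> * B D $ i" for \<epsilon>
    using \<open>linear B\<close> by (simp add: linear_add linear_scale)
  show "\<forall>\<^sub>F \<epsilon> in at_right 0. B (X + \<epsilon> *\<^sub>R D) $ i \<le> b $ i"
  proof (cases "B X $ i = b $ i")
    case True
    show ?thesis using eventually_at_right_less[of 0]
      by eventually_elim (use active[OF True] True in \<open>simp add: lin mult_le_0_iff\<close>)
  next
    case False
    then have "B X $ i < b $ i" using X[of i] by simp
    moreover have "((\<lambda>\<epsilon>. B X $ i + \<epsilon> * B D $ i) \<longlongrightarrow> B X $ i) (at_right 0)"
      by (auto intro!: tendsto_eq_intros)
    ultimately have "\<forall>\<^sub>F \<epsilon> in at_right 0. B X $ i + \<epsilon> * B D $ i < b $ i"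
      by (simp add: order_tendstoD(2))
    then show ?thesis by eventually_elim (simp add: lin)
  qed
qed

lemma feasible_tangent_direction:
  fixes A :: "real^'n^'n \<Rightarrow> real^'p" and B :: "real^'n^'n \<Rightarrow> real^'q" and X M :: "real^'n^'n"
  defines "Y \<equiv> X ** M + transpose M ** X"
  assumes "linear A" "linear B"
    and S: "S \<in> feas A a B b" "pd S" and X: "X \<in> feas A a B b"
    and AY: "A Y = 0" and BY: "\<And>i. B X $ i = b $ i \<Longrightarrow> B Y $ i = 0"
    and d: "\<delta> > 0"
  shows "\<exists>\<epsilon>>0. X + \<epsilon> *\<^sub>R (Y + \<delta> *\<^sub>R (S - X)) \<in> feas A a B b"
proof -
  define D where "D = Y + \<delta> *\<^sub>R (S - X)"
  have A_D: "A D = 0"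
    using \<open>linear A\<close> S X AY by (simp add: D_def feas_def linear_add linear_scale linear_diff)
  have B_D: "B D $ i \<le> 0" if "B X $ i = b $ i" for i
  proof -
    have "B D $ i = \<delta> * (B S $ i - b $ i)"
      using \<open>linear B\<close> BY[OF that] that by (simp add: D_def linear_add linear_scale linear_diff)
    then show ?thesis using S d by (simp add: feas_def mult_le_0_iff)
  qed
  have "psd X" and XB: "\<And>i. B X $ i \<le> b $ i" using X by (auto simp: feas_def)
  have "\<forall>\<^sub>F \<epsilon> in at_right 0. \<forall>i. B (X + \<epsilon> *\<^sub>R D) $ i \<le> b $ i"
    using \<open>linear B\<close> XB B_D by (rule eventually_linear_inequalities)
  then have "\<forall>\<^sub>F \<epsilon> in at_right 0. 0 < \<epsilon> \<and> psd (X + \<epsilon> *\<^sub>R D) \<and> (\<forall>i. B (X + \<epsilon> *\<^sub>R D) $ i \<le> b $ i)"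
    using eventually_at_right_less[of 0] eventually_psd_perturbation[OF \<open>psd X\<close> S(2) d, of M]
    by eventually_elim (simp add: D_def Y_def)
  then have "\<exists>\<epsilon>. 0 < \<epsilon> \<and> psd (X + \<epsilon> *\<^sub>R D) \<and> (\<forall>i. B (X + \<epsilon> *\<^sub>R D) $ i \<le> b $ i)"
    by (rule eventually_happens'[rotated]) simp
  then obtain \<epsilon> where "0 < \<epsilon>" "psd (X + \<epsilon> *\<^sub>R D)" "\<forall>i. B (X + \<epsilon> *\<^sub>R D) $ i \<le> b $ i"
    by blast
  moreover have "A (X + \<epsilon> *\<^sub>R D) = a"
    using \<open>linear A\<close> X A_D by (simp add: feas_def linear_add linear_scale)
  ultimately show ?thesis unfolding D_def feas_def by blast
qed

lemma normal_cone_inner_tangent_nonpos: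
  fixes A :: "real^'n^'n \<Rightarrow> real^'p" and B :: "real^'n^'n \<Rightarrow> real^'q" and X M :: "real^'n^'n"
  defines "Y \<equiv> X ** M + transpose M ** X"
  assumes "linear A" "linear B"
    and S: "S \<in> feas A a B b" "pd S" and X: "X \<in> feas A a B b"
    and AY: "A Y = 0" and BY: "\<And>i. B X $ i = b $ i \<Longrightarrow> B Y $ i = 0"
    and C: "C \<in> normal_cone (feas A a B b) X"
  shows "C \<bullet> Y \<le> 0"
proof -
  have C_le: "C \<bullet> Z \<le> C \<bullet> X" if "Z \<in> feas A a B b" for Z
    using C that by (simp add: normal_cone_iff)
  have "C \<bullet> Y + \<delta> * (C \<bullet> (S - X)) \<le> 0" if "\<delta> > 0" for \<delta>
  proof -
    obtain \<epsilon> where "\<epsilon> > 0" and feas: "X + \<epsilon> *\<^sub>R (Y + \<delta> *\<^sub>R (S - X)) \<in> feas A a B b"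
      using feasible_tangent_direction[OF \<open>linear A\<close> \<open>linear B\<close> S X AY[unfolded Y_def] BY[unfolded Y_def]
        \<open>\<delta> > 0\<close>]
      unfolding Y_def by blast
    from C_le[OF feas] have "\<epsilon> * (C \<bullet> Y + \<delta> * (C \<bullet> (S - X))) \<le> 0"
      by (simp add: inner_add_right distrib_left)
    then show ?thesis using \<open>\<epsilon> > 0\<close> by (simp add: mult_le_0_iff)
  qed
  then have "\<forall>\<^sub>F \<delta> in at_right 0. C \<bullet> Y + \<delta> * (C \<bullet> (S - X)) \<le> 0"
    using eventually_at_right_less[of 0] by (rule eventually_mono[rotated]) simp
  moreover have "((\<lambda>\<delta>. C \<bullet> Y + \<delta> * (C \<bullet> (S - X))) \<longlongrightarrow> C \<bullet> Y) (at_right 0)"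
    by (auto intro!: tendsto_eq_intros)
  ultimately show ?thesis by (intro tendsto_upperbound) auto
qed

section \<open>The normal cone\<close>

lemma sadj_eq_in_normal_cone:
  assumes "linear A" "X \<in> feas A a B b"
  shows "sadj A i \<in> normal_cone (feas A a B b) X"
  using assms by (auto simp: normal_cone_iff sadj_symm sadj_inner feas_symm feas_def)

lemma sadj_active_in_normal_cone:
  assumes "linear B" "X \<in> feas A a B b" "B X $ i = b $ i"
  shows "sadj B i \<in> normal_cone (feas A a B b) X"
  using assms by (auto simp: normal_cone_iff sadj_symm sadj_inner feas_symm feas_def)

lemma neg_outer_null_in_normal_cone:
  assumes "\<And>Z. Z \<in> K \<Longrightarrow> psd Z" and "X *v w = 0"
  shows "- outer w w \<in> normal_cone K X"
proof -
  have "- outer w w \<in> symm" by (rule subspace_neg[OF subspace_symm outer_symm])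
  with assms show ?thesis by (auto simp: normal_cone_iff outer_inner psd_def)
qed

lemma orthogonal_normal_cone_imp:
  fixes A :: "real^'n^'n \<Rightarrow> real^'p" and B :: "real^'n^'n \<Rightarrow> real^'q"
  assumes "linear A" "linear B" and X: "X \<in> feas A a B b" and Y: "Y \<in> symm"
    and perp: "\<And>C. C \<in> normal_cone (feas A a B b) X \<Longrightarrow> C \<bullet> Y = 0"
  shows "A Y = 0" and "\<And>i. B X $ i = b $ i \<Longrightarrow> B Y $ i = 0" and "Y \<in> tangent_space X"
proof -
  show "A Y = 0"
    using perp[OF sadj_eq_in_normal_cone[OF \<open>linear A\<close> X]] sadj_inner[OF \<open>linear A\<close> Y]
    by (simp add: vec_eq_iff)
  show "B Y $ i = 0" if "B X $ i = b $ i" for i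
    using perp[OF sadj_active_in_normal_cone[OF \<open>linear B\<close> X that]] sadj_inner[OF \<open>linear B\<close> Y]
    by simp
  have "w \<bullet> (Y *v w) = 0" if "X *v w = 0" for w
    using perp[OF neg_outer_null_in_normal_cone[OF _ that]] by (simp add: feas_def outer_inner)
  then show "Y \<in> tangent_space X"
    using feas_symm[OF X] Y by (rule_tac symm_in_tangent_space)
qed

lemma orthogonal_normal_cone_if:
  fixes A :: "real^'n^'n \<Rightarrow> real^'p" and B :: "real^'n^'n \<Rightarrow> real^'q"
  assumes "linear A" "linear B" and slater: "\<exists>S\<in>feas A a B b. pd S" and X: "X \<in> feas A a B b"
    and AY: "A Y = 0" and BY: "\<And>i. B X $ i = b $ i \<Longrightarrow> B Y $ i = 0" and "Y \<in> tangent_space X"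
    and C: "C \<in> normal_cone (feas A a B b) X"
  shows "C \<bullet> Y = 0"
proof -
  obtain S where S: "S \<in> feas A a B b" "pd S" using slater by blast
  obtain M where Y: "Y = X ** M + transpose M ** X"
    using \<open>Y \<in> tangent_space X\<close> by (auto simp: tangent_space_def)
  have "- Y = X ** (- M) + transpose (- M) ** X"
    by (simp add: Y matrix_matrix_mult_def transpose_def vec_eq_iff sum_negf)
  moreover have "A (- Y) = 0" "\<And>i. B X $ i = b $ i \<Longrightarrow> B (- Y) $ i = 0"
    using AY BY \<open>linear A\<close> \<open>linear B\<close> by (simp_all add: linear_neg)
  ultimately have "C \<bullet> (- Y) \<le> 0"
    using normal_cone_inner_tangent_nonpos[OF \<open>linear A\<close> \<open>linear B\<close> S X _ _ C, of "- M"] by simp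
  moreover have "C \<bullet> Y \<le> 0"
    using normal_cone_inner_tangent_nonpos[OF \<open>linear A\<close> \<open>linear B\<close> S X _ _ C, of M] AY BY
    by (simp add: Y)
  ultimately show ?thesis by simp
qed

lemma orthogonal_span_iff: "(\<forall>w\<in>span W. orthogonal w y) \<longleftrightarrow> (\<forall>w\<in>W. w \<bullet> y = 0)"
proof
  assume perp: "\<forall>w\<in>W. w \<bullet> y = 0"
  show "\<forall>w\<in>span W. orthogonal w y"
  proof
    fix w assume "w \<in> span W"
    then have "orthogonal y w"
      by (rule orthogonal_to_span) (use perp in \<open>auto simp: orthogonal_def inner_commute\<close>)
    then show "orthogonal w y" by (simp add: orthogonal_commute)
  qed
qed (simp add: orthogonal_def span_base)

lemma dim_normal_cone:
  fixes A :: "real^'n^'n \<Rightarrow> real^'p" and B :: "real^'n^'n \<Rightarrow> real^'q"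
  assumes "linear A" "linear B" and "\<exists>S\<in>feas A a B b. pd S" and X: "X \<in> feas A a B b"
  shows "dim (normal_cone (feas A a B b) X) =
           dim (symm :: (real^'n^'n) set) -
           dim ({Z \<in> symm. A Z = 0}
                \<inter> {Z \<in> symm. orth_proj {z. supp z \<inter> supp (B X - b) = {}} (B Z) = 0}
                \<inter> span {(1/2) *\<^sub>R (X ** outer u v + outer v u ** X) | u v. True})"
    (is "dim ?N = _ - dim ?L")
proof -
  have "span ?N \<subseteq> symm"
    by (rule span_minimal[OF _ subspace_symm]) (auto simp: normal_cone_def)
  then have "dim {Y \<in> symm. \<forall>C\<in>span ?N. orthogonal C Y} + dim ?N = dim (symm :: (real^'n^'n) set)"
    using dim_subspace_orthogonal_to_vectors[OF subspace_span subspace_symm] by simp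
  moreover have "{Y \<in> symm. \<forall>C\<in>span ?N. orthogonal C Y} = ?L"
  proof -
    have "orth_proj {z. supp z \<inter> supp (B X - b) = {}} (B Y) = 0 \<longleftrightarrow> (\<forall>i. B X $ i = b $ i \<longrightarrow> B Y $ i = 0)"
      for Y by (simp add: orth_proj_supp_eq_0_iff)
    then show ?thesis
      unfolding orthogonal_span_iff span_tangent_generators
      using orthogonal_normal_cone_imp[OF assms(1,2) X] orthogonal_normal_cone_if[OF assms]
      by blast
  qed
  ultimately show ?thesis by simp
qed

section \<open>Rank-one points\<close>

definition sym_outer :: "real^'n \<Rightarrow> real^'n \<Rightarrow> real^'n^'n" where
  "sym_outer x w = outer x w + outer w x"

lemma linear_sym_outer: "linear (sym_outer x)"
  by (rule linearI) (simp_all add: sym_outer_def outer_def vec_eq_iff algebra_simps)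

lemma sym_outer_symm: "sym_outer x w \<in> symm"
  by (rule symmI) (simp add: sym_outer_def outer_def)

lemma inj_sym_outer:
  assumes "x \<noteq> 0" shows "inj (sym_outer x)"
proof -
  have "w = 0" if "sym_outer x w = 0" for w
  proof -
    have eq: "(w \<bullet> x) *\<^sub>R x + (x \<bullet> x) *\<^sub>R w = 0"
      using arg_cong[OF that, of "\<lambda>Z. Z *v x"]
      by (simp add: sym_outer_def matrix_vector_mult_add_rdistrib outer_mv)
    then have "x \<bullet> ((w \<bullet> x) *\<^sub>R x + (x \<bullet> x) *\<^sub>R w) = 0" by simp
    then have "2 * (w \<bullet> x) * (x \<bullet> x) = 0" by (simp add: inner_add_right inner_commute algebra_simps)
    then show "w = 0" using eq assms by simp
  qed
  then show ?thesis
    by (simp add: linear_inj_iff_eq_0[OF linear_sym_outer])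
qed

lemma tangent_space_outer:
  fixes x :: "real^'n"
  assumes "x \<noteq> 0" shows "tangent_space (outer x x) = range (sym_outer x)"
proof -
  have "tangent_space (outer x x) = {sym_outer x (transpose M *v x) | M. True}"
    by (simp add: tangent_space_def sym_outer_def outer_def matrix_matrix_mult_def vec_eq_iff
        matrix_vector_mult_def transpose_def sum_distrib_left sum_distrib_right ac_simps)
  moreover have "transpose ((1 / (x \<bullet> x)) *\<^sub>R outer x w) *v x = w" for w
    using assms by (simp add: transpose_scalar transpose_outer scaleR_matrix_vector_assoc[symmetric] outer_mv)
  ultimately show ?thesis by (auto simp: image_def) metis
qed

lemma sadj_sym_outer:
  assumes "linear A"
  shows "A (sym_outer x w) $ i = 2 * ((sadj A i *v x) \<bullet> w)"
proof -
  have "A (sym_outer x w) $ i = sadj A i \<bullet> sym_outer x w"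
    using sadj_inner[OF assms sym_outer_symm] by simp
  also have "\<dots> = x \<bullet> (sadj A i *v w) + w \<bullet> (sadj A i *v x)"
    by (simp add: sym_outer_def inner_add_right inner_commute[of "sadj A i"] outer_inner)
  also have "x \<bullet> (sadj A i *v w) = w \<bullet> (sadj A i *v x)"
    by (rule symm_inner_mv_commute[OF sadj_symm[OF assms]])
  finally show ?thesis by (simp add: inner_commute)
qed

lemma reduced_space_rank_one:
  fixes A :: "real^'n^'n \<Rightarrow> real^'p" and B :: "real^'n^'n \<Rightarrow> real^'q" and x :: "real^'n"
  assumes "linear A" "linear B" "x \<noteq> 0"
  shows "{Z \<in> symm. A Z = 0}
           \<inter> {Z \<in> symm. orth_proj {z. supp z \<inter> supp (B (outer x x) - b) = {}} (B Z) = 0}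
           \<inter> span {(1/2) *\<^sub>R (outer x x ** outer u v + outer v u ** outer x x) | u v. True}
       = sym_outer x ` orth_compl ({sadj A i *v x | i. True}
           \<union> {sadj B i *v x | i. i \<notin> supp (B (outer x x) - b)})"
proof -
  have "sym_outer x w \<in> {Z \<in> symm. A Z = 0} \<longleftrightarrow> (\<forall>i. (sadj A i *v x) \<bullet> w = 0)" for w
    using sym_outer_symm[of x w] by (simp add: vec_eq_iff sadj_sym_outer[OF \<open>linear A\<close>])
  moreover have "sym_outer x w \<in> {Z \<in> symm. orth_proj {z. supp z \<inter> supp (B (outer x x) - b) = {}} (B Z) = 0}
      \<longleftrightarrow> (\<forall>i. i \<notin> supp (B (outer x x) - b) \<longrightarrow> (sadj B i *v x) \<bullet> w = 0)" for w
    using sym_outer_symm[of x w]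
    by (simp only: orth_proj_supp_eq_0_iff) (auto simp: supp_def sadj_sym_outer[OF \<open>linear B\<close>])
  moreover have "w \<in> orth_compl ({sadj A i *v x | i. True} \<union> {sadj B i *v x | i. i \<notin> supp (B (outer x x) - b)})
      \<longleftrightarrow> (\<forall>i. (sadj A i *v x) \<bullet> w = 0)
        \<and> (\<forall>i. i \<notin> supp (B (outer x x) - b) \<longrightarrow> (sadj B i *v x) \<bullet> w = 0)" for w
    by (auto simp: orth_compl_def)
  ultimately show ?thesis
    unfolding span_tangent_generators tangent_space_outer[OF \<open>x \<noteq> 0\<close>] by blast
qed

lemma dim_orth_compl_eq_0_iff:
  fixes W :: "(real^'n) set"
  shows "dim (orth_compl W) = 0 \<longleftrightarrow> span W = UNIV"
proof -
  have "orth_compl W = {y \<in> UNIV. \<forall>w\<in>span W. orthogonal w y}"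
    by (simp add: orth_compl_def orthogonal_span_iff)
  then have "dim (orth_compl W) + dim (span W) = dim (UNIV :: (real^'n) set)"
    using dim_subspace_orthogonal_to_vectors[OF subspace_span[of W] subspace_UNIV] by simp
  then have "dim (orth_compl W) = 0 \<longleftrightarrow> dim W = DIM(real^'n)"
    by (simp del: dim_eq_0, presburger)
  then show ?thesis by (simp only: dim_eq_full)
qed

lemma dim_symm_pos: "dim (symm :: (real^'n^'n) set) > 0"
proof -
  have "mat 1 \<in> (symm :: (real^'n^'n) set)" by (rule symmI) (simp add: mat_def)
  moreover have "(mat 1 :: real^'n^'n) \<noteq> 0"
  proof
    assume "(mat 1 :: real^'n^'n) = 0"
    then have "(mat 1 :: real^'n^'n) *v axis undefined 1 = 0" by simp
    then show False by simp
  qed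
  ultimately have "\<not> symm \<subseteq> {0::real^'n^'n}" by blast
  then show ?thesis using dim_eq_0 by (metis gr0I)
qed

lemma dim_normal_cone_rank_one:
  fixes A :: "real^'n^'n \<Rightarrow> real^'p" and B :: "real^'n^'n \<Rightarrow> real^'q" and b :: "real^'q" and x :: "real^'n"
  defines "W \<equiv> {sadj A i *v x | i. True} \<union> {sadj B i *v x | i. i \<notin> supp (B (outer x x) - b)}"
  assumes "linear A" "linear B" and "\<exists>S\<in>feas A a B b. pd S"
    and "outer x x \<in> feas A a B b" and "x \<noteq> 0"
  shows "dim (normal_cone (feas A a B b) (outer x x)) = dim (symm :: (real^'n^'n) set) - dim (orth_compl W)"
proof -
  have "dim (normal_cone (feas A a B b) (outer x x)) =
      dim (symm :: (real^'n^'n) set) - dim (sym_outer x ` orth_compl W)"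
    using dim_normal_cone[OF assms(2-5)]
    unfolding reduced_space_rank_one[OF assms(2,3) \<open>x \<noteq> 0\<close>] W_def .
  moreover have "dim (sym_outer x ` orth_compl W) = dim (orth_compl W)"
    using inj_sym_outer[OF \<open>x \<noteq> 0\<close>]
    by (intro eucl.dim_image_eq linear_sym_outer) (auto intro: inj_on_subset)
  ultimately show ?thesis by simp
qed

lemma is_vertex_rank_one_iff:
  fixes A :: "real^'n^'n \<Rightarrow> real^'p" and B :: "real^'n^'n \<Rightarrow> real^'q" and b :: "real^'q" and x :: "real^'n"
  defines "W \<equiv> {sadj A i *v x | i. True} \<union> {sadj B i *v x | i. i \<notin> supp (B (outer x x) - b)}"
  assumes "linear A" "linear B" and "\<exists>S\<in>feas A a B b. pd S"
    and X: "outer x x \<in> feas A a B b" and "x \<noteq> 0"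
  shows "is_vertex (feas A a B b) (outer x x) \<longleftrightarrow> span W = UNIV"
proof -
  have "is_vertex (feas A a B b) (outer x x) \<longleftrightarrow>
      dim (symm :: (real^'n^'n) set) - dim (orth_compl W) = dim (symm :: (real^'n^'n) set)"
    using X dim_normal_cone_rank_one[OF assms(2-)] by (simp add: is_vertex_def W_def)
  also have "\<dots> \<longleftrightarrow> dim (orth_compl W) = 0" using dim_symm_pos[where 'n='n] by linarith
  also have "\<dots> \<longleftrightarrow> span W = UNIV" by (rule dim_orth_compl_eq_0_iff)
  finally show ?thesis .
qed

theorem theorem2p9:
  fixes A :: "real^'n^'n \<Rightarrow> real^'p" and B :: "real^'n^'n \<Rightarrow> real^'q"
    and a :: "real^'p" and b :: "real^'q" and Xb :: "real^'n^'n"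
  assumes "linear A" and "linear B"
    and slater: "\<exists>X\<in>feas A a B b. pd X"
    and Xb: "Xb \<in> feas A a B b"
  shows "dim (normal_cone (feas A a B b) Xb) =
           dim (symm :: (real^'n^'n) set) -
           dim ({X \<in> symm. A X = 0}
                \<inter> {X \<in> symm. orth_proj {z. supp z \<inter> supp (B Xb - b) = {}} (B X) = 0}
                \<inter> span {(1/2) *\<^sub>R (Xb ** outer u v + outer v u ** Xb) | u v. True})
         \<and> (\<forall>x. x \<noteq> 0 \<longrightarrow> Xb = outer x x \<longrightarrow>
           (let W = {sadj A i *v x | i. True}
                    \<union> {sadj B i *v x | i. i \<notin> supp (B (outer x x) - b)}
            in dim (normal_cone (feas A a B b) (outer x x)) =
                 dim (symm :: (real^'n^'n) set) - dim (orth_compl W)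
               \<and> (is_vertex (feas A a B b) (outer x x) \<longleftrightarrow> span W = UNIV)))"
  using dim_normal_cone[OF assms] dim_normal_cone_rank_one[OF assms(1-3)]
    is_vertex_rank_one_iff[OF assms(1-3)] Xb
  unfolding Let_def by blast

end
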